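(* Let $H$ be a separable infinite-dimensional complex Hilbert space and let $\mathcal{G}_{\infty}(H)$ be the set of all closed subspaces of $H$ whose dimension and codimension are both infinite. Let $f:\mathcal{G}_{\infty}(H)\to\mathcal{G}_{\infty}(H)$ be a map sending every pair of subspaces to an equivalent pair of subspaces. Let $L:H\to H$ be a linear or conjugate linear isometry and, for each $X\in\mathcal{G}_{\infty}(H)$, let $O(X)$ be a closed subspace orthogonal to the range of $L$ such that $f(X)=L(X)\oplus O(X)$ for all $X\in\mathcal{G}_{\infty}(H)$. If $O(X)=0$ for some $X\in\mathcal{G}_{\infty}(H)$, then $O(X)=0$ for all $X\in\mathcal{G}_{\infty}(H)$.
   Context: A linear (conjugate linear) isometry $H\to H$ is a norm-preserving linear (conjugate linear) map, not necessarily surjective. Two pairs of closed subspaces are equivalent if some linear isometry of $H$ transfers one pair (as an unordered pair) to the other; $f$ sends every pair to an equivalent pair if for all $X,Y$ there is a linear isometry $M$ with $\{f(X),f(Y)\}=\{M(X),M(Y)\}$. *)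

theory Defs
  imports "HOL-Analysis.Analysis"
begin

text \<open>Model of the separable infinite-dimensional complex Hilbert space H:
  the sequence space l2(N) of square-summable complex sequences.
  (Every separable infinite-dimensional complex Hilbert space is unitarily
  isomorphic to it, and the statement is invariant under such isomorphisms.)\<close>

type_synonym vec = "nat \<Rightarrow> complex"

definition l2 :: "vec set" where
  "l2 = {x. summable (\<lambda>n. (cmod (x n))^2)}"

definition vzero :: vec where "vzero = (\<lambda>n. 0)"

definition vadd :: "vec \<Rightarrow> vec \<Rightarrow> vec" where
  "vadd x y = (\<lambda>n. x n + y n)"

definition vdiff :: "vec \<Rightarrow> vec \<Rightarrow> vec" where
  "vdiff x y = (\<lambda>n. x n - y n)"

definition vscale :: "complex \<Rightarrow> vec \<Rightarrow> vec" where
  "vscale c x = (\<lambda>n. c * x n)"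

definition l2inner :: "vec \<Rightarrow> vec \<Rightarrow> complex" where
  "l2inner x y = (\<Sum>n. x n * cnj (y n))"

definition l2norm :: "vec \<Rightarrow> real" where
  "l2norm x = sqrt (\<Sum>n. (cmod (x n))^2)"

definition closed_subspace :: "vec set \<Rightarrow> bool" where
  "closed_subspace X \<longleftrightarrow>
     X \<subseteq> l2 \<and> vzero \<in> X \<and>
     (\<forall>x\<in>X. \<forall>y\<in>X. vadd x y \<in> X) \<and>
     (\<forall>c. \<forall>x\<in>X. vscale c x \<in> X) \<and>
     (\<forall>s x. (\<forall>k. s k \<in> X) \<longrightarrow> x \<in> l2 \<longrightarrow>
        (\<lambda>k. l2norm (vdiff (s k) x)) \<longlonglongrightarrow> 0 \<longrightarrow> x \<in> X)"

definition cspan_l2 :: "vec set \<Rightarrow> vec set" where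
  "cspan_l2 F = {(\<lambda>n. \<Sum>v\<in>G. c v * v n) | G c. finite G \<and> G \<subseteq> F}"

definition fin_dim :: "vec set \<Rightarrow> bool" where
  "fin_dim X \<longleftrightarrow> (\<exists>F. finite F \<and> F \<subseteq> l2 \<and> X \<subseteq> cspan_l2 F)"

definition orth_compl :: "vec set \<Rightarrow> vec set" where
  "orth_compl X = {y \<in> l2. \<forall>x\<in>X. l2inner x y = 0}"

text \<open>G_infinity(H): closed subspaces of infinite dimension and infinite
  codimension (codimension of a closed subspace = dimension of its orthogonal
  complement).\<close>
definition Ginf :: "vec set set" where
  "Ginf = {X. closed_subspace X \<and> \<not> fin_dim X \<and> \<not> fin_dim (orth_compl X)}"

definition isometry_on_l2 :: "(vec \<Rightarrow> vec) \<Rightarrow> bool" where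
  "isometry_on_l2 M \<longleftrightarrow> (\<forall>x\<in>l2. M x \<in> l2 \<and> l2norm (M x) = l2norm x)"

definition lin_isometry :: "(vec \<Rightarrow> vec) \<Rightarrow> bool" where
  "lin_isometry M \<longleftrightarrow> isometry_on_l2 M \<and>
     (\<forall>x\<in>l2. \<forall>y\<in>l2. M (vadd x y) = vadd (M x) (M y)) \<and>
     (\<forall>c. \<forall>x\<in>l2. M (vscale c x) = vscale c (M x))"

definition conj_lin_isometry :: "(vec \<Rightarrow> vec) \<Rightarrow> bool" where
  "conj_lin_isometry M \<longleftrightarrow> isometry_on_l2 M \<and>
     (\<forall>x\<in>l2. \<forall>y\<in>l2. M (vadd x y) = vadd (M x) (M y)) \<and>
     (\<forall>c. \<forall>x\<in>l2. M (vscale c x) = vscale (cnj c) (M x))"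

text \<open>Pairs {X,Y} and {X',Y'} are equivalent if a linear isometry transfers one
  (as an unordered pair) to the other.\<close>
definition sends_pairs_to_equiv :: "(vec set \<Rightarrow> vec set) \<Rightarrow> bool" where
  "sends_pairs_to_equiv f \<longleftrightarrow>
     (\<forall>X\<in>Ginf. \<forall>Y\<in>Ginf. \<exists>M. lin_isometry M \<and> {f X, f Y} = {M ` X, M ` Y})"

definition set_sum :: "vec set \<Rightarrow> vec set \<Rightarrow> vec set" where
  "set_sum A B = {vadd a b | a b. a \<in> A \<and> b \<in> B}"

end

(*
  Say that B is reachable from A if B meets the orthogonal complement of A only in 0.
  If O(A) = 0 and B is reachable from A, then O(B) = 0. Indeed, write {f A, f B} = {M A, M B}
  with M a linear isometry. If f B = M B, a vector of O(B) lies in M B and is orthogonal to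
  range L, which contains f A = M A; so it is the image of a vector of B orthogonal to A.
  If f B = M A, a vector M a of O(B) is orthogonal to M B = f A = L A, hence a is orthogonal
  to B; then L a = M b for some b in B, and M b is orthogonal to M A = L B + O(B), which
  forces b = 0 and so a = 0.

  Any X is reachable from X0 in four steps. Choose orthonormal sequences a in X0 and q in the
  orthogonal complement of X, mutually orthogonal, and an orthonormal sequence u in X that is
  total in X. Then X0, span (a + q), span q, span (q + u), X is a chain of reachable subspaces
  of G_infinity, where span is the closed span, taken as the double orthogonal complement.
*)
theory Submission
  imports Defs "HOL-Library.Function_Algebras"
begin

section \<open>Inner product calculus on l2\<close>

definition l2sqnorm :: "vec \<Rightarrow> real" where
  "l2sqnorm x = (\<Sum>n. (cmod (x n))^2)"

lemma mem_l2_iff: "x \<in> l2 \<longleftrightarrow> summable (\<lambda>n. (cmod (x n))^2)"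
  by (simp add: l2_def)

lemma summable_l2inner:
  assumes "x \<in> l2" "y \<in> l2"
  shows "summable (\<lambda>n. x n * cnj (y n))"
proof (rule summable_norm_cancel)
  have "summable (\<lambda>n. (cmod (x n))^2 + (cmod (y n))^2)"
    using assms by (intro summable_add) (auto simp: mem_l2_iff)
  moreover have "norm (norm (x n * cnj (y n))) \<le> (cmod (x n))^2 + (cmod (y n))^2" for n
  proof -
    have "2 * (cmod (x n) * cmod (y n)) \<le> (cmod (x n))^2 + (cmod (y n))^2"
      using sum_squares_bound[of "cmod (x n)" "cmod (y n)"] by (simp add: power2_eq_square)
    moreover have "norm (norm (x n * cnj (y n))) = cmod (x n) * cmod (y n)"
      by (simp add: norm_mult)
    moreover have "0 \<le> cmod (x n) * cmod (y n)" by simp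
    ultimately show ?thesis by linarith
  qed
  ultimately show "summable (\<lambda>n. norm (x n * cnj (y n)))"
    by (rule summable_comparison_test'[where N=0])
qed

lemma vzero_in_l2 [simp]: "vzero \<in> l2"
  by (simp add: mem_l2_iff vzero_def)

lemma vadd_in_l2 [simp]:
  assumes "x \<in> l2" "y \<in> l2"
  shows "vadd x y \<in> l2"
proof -
  have "summable (\<lambda>n. 2 * (cmod (x n))^2 + 2 * (cmod (y n))^2)"
    using assms by (intro summable_add summable_mult) (auto simp: mem_l2_iff)
  moreover have "norm ((cmod (x n + y n))^2) \<le> 2 * (cmod (x n))^2 + 2 * (cmod (y n))^2" for n
  proof -
    have "(cmod (x n + y n))^2 \<le> (cmod (x n) + cmod (y n))^2"
      by (simp add: norm_triangle_ineq power_mono)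
    also have "\<dots> \<le> 2 * (cmod (x n))^2 + 2 * (cmod (y n))^2"
      using sum_squares_bound[of "cmod (x n)" "cmod (y n)"]
      by (simp add: power2_eq_square algebra_simps)
    finally show ?thesis by simp
  qed
  ultimately show ?thesis
    unfolding mem_l2_iff vadd_def by (rule summable_comparison_test'[where N=0])
qed

lemma vscale_in_l2 [simp]: "x \<in> l2 \<Longrightarrow> vscale c x \<in> l2"
  unfolding mem_l2_iff vscale_def norm_mult power_mult_distrib by (rule summable_mult)

lemma vdiff_eq_vadd_vscale: "vdiff x y = vadd x (vscale (-1) y)"
  by (simp add: vdiff_def vadd_def vscale_def)

lemma vdiff_in_l2 [simp]: "x \<in> l2 \<Longrightarrow> y \<in> l2 \<Longrightarrow> vdiff x y \<in> l2"
  by (simp add: vdiff_eq_vadd_vscale)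

lemma l2inner_vadd_left:
  assumes "x \<in> l2" "y \<in> l2" "z \<in> l2"
  shows "l2inner (vadd x y) z = l2inner x z + l2inner y z"
proof -
  have "l2inner (vadd x y) z = (\<Sum>n. x n * cnj (z n) + y n * cnj (z n))"
    by (simp add: l2inner_def vadd_def distrib_right)
  also have "\<dots> = l2inner x z + l2inner y z"
    unfolding l2inner_def using summable_l2inner assms by (intro suminf_add[symmetric]) auto
  finally show ?thesis .
qed

lemma l2inner_vscale_left:
  assumes "x \<in> l2" "z \<in> l2"
  shows "l2inner (vscale c x) z = c * l2inner x z"
proof -
  have "l2inner (vscale c x) z = (\<Sum>n. c * (x n * cnj (z n)))"
    by (simp add: l2inner_def vscale_def mult.assoc)
  also have "\<dots> = c * l2inner x z"
    unfolding l2inner_def using summable_l2inner assms by (intro suminf_mult) auto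
  finally show ?thesis .
qed

lemma l2inner_commute:
  assumes "x \<in> l2" "y \<in> l2"
  shows "l2inner y x = cnj (l2inner x y)"
proof -
  have "(\<lambda>n. x n * cnj (y n)) sums l2inner x y"
    using summable_l2inner[OF assms] by (simp add: l2inner_def summable_sums)
  hence "(\<lambda>n. y n * cnj (x n)) sums cnj (l2inner x y)"
    using sums_cnj[THEN iffD2] by (fastforce simp: ac_simps)
  thus ?thesis by (simp add: l2inner_def sums_iff)
qed

lemma l2inner_vadd_right:
  "x \<in> l2 \<Longrightarrow> y \<in> l2 \<Longrightarrow> z \<in> l2 \<Longrightarrow> l2inner z (vadd x y) = l2inner z x + l2inner z y"
  by (simp add: l2inner_commute[of _ z] l2inner_vadd_left)

lemma l2inner_vscale_right:
  "x \<in> l2 \<Longrightarrow> z \<in> l2 \<Longrightarrow> l2inner z (vscale c x) = cnj c * l2inner z x"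
  by (simp add: l2inner_commute[of _ z] l2inner_vscale_left)

lemma l2inner_vdiff_left:
  "x \<in> l2 \<Longrightarrow> y \<in> l2 \<Longrightarrow> z \<in> l2 \<Longrightarrow> l2inner (vdiff x y) z = l2inner x z - l2inner y z"
  by (simp add: vdiff_eq_vadd_vscale l2inner_vadd_left l2inner_vscale_left)

lemma l2inner_vdiff_right:
  "x \<in> l2 \<Longrightarrow> y \<in> l2 \<Longrightarrow> z \<in> l2 \<Longrightarrow> l2inner z (vdiff x y) = l2inner z x - l2inner z y"
  by (simp add: vdiff_eq_vadd_vscale l2inner_vadd_right l2inner_vscale_right)

lemma l2inner_vzero_left [simp]: "l2inner vzero y = 0"
  and l2inner_vzero_right [simp]: "l2inner y vzero = 0"
  by (simp_all add: l2inner_def vzero_def)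

lemma l2inner_self:
  assumes "x \<in> l2"
  shows "l2inner x x = of_real (l2sqnorm x)"
proof -
  have "l2inner x x = (\<Sum>n. of_real ((cmod (x n))^2))"
    unfolding l2inner_def by (simp only: complex_norm_square)
  also have "\<dots> = of_real (l2sqnorm x)"
    unfolding l2sqnorm_def using assms by (intro suminf_of_real[symmetric]) (simp add: mem_l2_iff)
  finally show ?thesis .
qed

lemma l2sqnorm_nonneg: "x \<in> l2 \<Longrightarrow> 0 \<le> l2sqnorm x"
  unfolding l2sqnorm_def by (intro suminf_nonneg) (auto simp: mem_l2_iff)

lemma l2norm_squared: "x \<in> l2 \<Longrightarrow> (l2norm x)^2 = l2sqnorm x"
  using l2sqnorm_nonneg by (simp add: l2norm_def l2sqnorm_def[symmetric])

lemma l2sqnorm_eq_0_iff: "x \<in> l2 \<Longrightarrow> l2sqnorm x = 0 \<longleftrightarrow> x = vzero"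
  using suminf_eq_zero_iff[of "\<lambda>n. (cmod (x n))^2"]
  by (auto simp: mem_l2_iff l2sqnorm_def vzero_def fun_eq_iff)

lemma l2inner_self_eq_0_iff: "x \<in> l2 \<Longrightarrow> l2inner x x = 0 \<longleftrightarrow> x = vzero"
  by (simp add: l2inner_self l2sqnorm_eq_0_iff)

lemma l2inner_cauchy_schwarz_squared:
  assumes "x \<in> l2" "y \<in> l2"
  shows "(cmod (l2inner x y))^2 \<le> l2sqnorm x * l2sqnorm y"
proof (cases "y = vzero")
  case False
  define p where "p = l2inner x y"
  define ny where "ny = l2sqnorm y"
  define t where "t = p / of_real ny"
  have "ny \<noteq> 0" using False assms(2) l2sqnorm_eq_0_iff by (simp add: ny_def)
  moreover have "ny \<ge> 0" using assms(2) l2sqnorm_nonneg by (simp add: ny_def)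
  ultimately have ny: "ny \<noteq> 0" "ny > 0" by simp_all
  define z where "z = vdiff x (vscale t y)"
  have z: "z \<in> l2" using assms by (simp add: z_def)
  have "l2inner z z = l2inner x x - cnj t * p - t * cnj p + t * cnj t * l2inner y y"
    using assms unfolding z_def p_def
    by (simp add: l2inner_vdiff_left l2inner_vdiff_right l2inner_vscale_left l2inner_vscale_right
        l2inner_commute[of x y] algebra_simps)
  also have "\<dots> = of_real (l2sqnorm x) - p * cnj p / of_real ny"
    using ny assms by (simp add: l2inner_self t_def ny_def[symmetric] field_simps)
  also have "\<dots> = of_real (l2sqnorm x - (cmod p)^2 / ny)"
    by (simp add: complex_norm_square[symmetric])
  finally have "l2sqnorm z = l2sqnorm x - (cmod p)^2 / ny"
    by (simp only: l2inner_self[OF z] of_real_eq_iff)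
  moreover have "0 \<le> l2sqnorm z" using z by (rule l2sqnorm_nonneg)
  ultimately have "(cmod p)^2 / ny \<le> l2sqnorm x" by linarith
  thus ?thesis using ny by (simp add: p_def ny_def[symmetric] field_simps)
qed (simp add: l2sqnorm_def l2inner_def vzero_def)

lemma l2inner_cauchy_schwarz:
  assumes "x \<in> l2" "y \<in> l2"
  shows "cmod (l2inner x y) \<le> l2norm x * l2norm y"
proof (rule power2_le_imp_le)
  show "(cmod (l2inner x y))^2 \<le> (l2norm x * l2norm y)^2"
    using l2inner_cauchy_schwarz_squared[OF assms] assms
    by (simp add: power_mult_distrib l2norm_squared)
qed (simp add: l2norm_def l2sqnorm_def[symmetric] l2sqnorm_nonneg assms)

lemma l2sqnorm_vadd:
  assumes "x \<in> l2" "y \<in> l2"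
  shows "l2sqnorm (vadd x y) = l2sqnorm x + l2sqnorm y + 2 * Re (l2inner x y)"
proof -
  have "of_real (l2sqnorm (vadd x y)) = l2inner x x + l2inner y y + (l2inner x y + cnj (l2inner x y))"
    using assms by (simp add: l2inner_self[symmetric] l2inner_vadd_left l2inner_vadd_right
        l2inner_commute[of x y])
  also have "\<dots> = of_real (l2sqnorm x + l2sqnorm y + 2 * Re (l2inner x y))"
    using assms by (simp add: l2inner_self complex_add_cnj)
  finally show ?thesis by (simp only: of_real_eq_iff)
qed

lemma l2sqnorm_vscale: "x \<in> l2 \<Longrightarrow> l2sqnorm (vscale c x) = (cmod c)^2 * l2sqnorm x"
  unfolding l2sqnorm_def vscale_def norm_mult power_mult_distrib
  by (intro suminf_mult) (simp add: mem_l2_iff)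

lemma l2sqnorm_vdiff:
  assumes "x \<in> l2" "y \<in> l2"
  shows "l2sqnorm (vdiff x y) = l2sqnorm x + l2sqnorm y - 2 * Re (l2inner x y)"
  using assms
  by (simp add: vdiff_eq_vadd_vscale l2sqnorm_vadd l2sqnorm_vscale l2inner_vscale_right)

section \<open>Orthogonal complements\<close>

lemma orth_compl_subset_l2: "orth_compl E \<subseteq> l2"
  by (auto simp: orth_compl_def)

lemma closed_subspace_imp_subset_l2: "closed_subspace X \<Longrightarrow> X \<subseteq> l2"
  by (simp add: closed_subspace_def)

lemma closed_subspace_vzero: "closed_subspace X \<Longrightarrow> vzero \<in> X"
  by (simp add: closed_subspace_def)

lemma closed_subspace_orth_compl:
  assumes "E \<subseteq> l2"
  shows "closed_subspace (orth_compl E)"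
  unfolding closed_subspace_def
proof (intro conjI ballI allI impI)
  show "orth_compl E \<subseteq> l2" by (rule orth_compl_subset_l2)
  show "vzero \<in> orth_compl E" by (simp add: orth_compl_def)
  fix x y assume "x \<in> orth_compl E" "y \<in> orth_compl E"
  thus "vadd x y \<in> orth_compl E"
    using assms by (auto simp: orth_compl_def l2inner_vadd_right subset_iff)
next
  fix c x assume "x \<in> orth_compl E"
  thus "vscale c x \<in> orth_compl E"
    using assms by (auto simp: orth_compl_def l2inner_vscale_right subset_iff)
next
  fix s x assume s: "\<forall>k. s k \<in> orth_compl E" and x: "x \<in> l2"
    and lim: "(\<lambda>k. l2norm (vdiff (s k) x)) \<longlonglongrightarrow> 0"
  have "l2inner e x = 0" if e: "e \<in> E" for e
  proof -
    have el: "e \<in> l2" using e assms by auto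
    have "cmod (l2inner e x) \<le> l2norm e * l2norm (vdiff (s k) x)" for k
    proof -
      have sk: "s k \<in> l2" "l2inner e (s k) = 0" using s e by (auto simp: orth_compl_def)
      hence "cmod (l2inner e x) = cmod (l2inner e (vdiff (s k) x))"
        using el x by (simp add: l2inner_vdiff_right)
      also have "\<dots> \<le> l2norm e * l2norm (vdiff (s k) x)"
        using sk el x by (intro l2inner_cauchy_schwarz) auto
      finally show ?thesis .
    qed
    moreover have lim': "(\<lambda>k. l2norm e * l2norm (vdiff (s k) x)) \<longlonglongrightarrow> l2norm e * 0"
      by (intro tendsto_mult_left lim)
    ultimately have "cmod (l2inner e x) \<le> l2norm e * 0"
      by (intro LIMSEQ_le_const[OF lim']) auto
    thus ?thesis by simp
  qed
  thus "x \<in> orth_compl E" using x by (auto simp: orth_compl_def)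
qed

lemma subset_orth_compl_orth_compl:
  assumes "E \<subseteq> l2"
  shows "E \<subseteq> orth_compl (orth_compl E)"
proof
  fix e assume e: "e \<in> E"
  have "l2inner z e = 0" if "z \<in> orth_compl E" for z
    using that e assms l2inner_commute[of e z] by (auto simp: orth_compl_def)
  thus "e \<in> orth_compl (orth_compl E)" using e assms by (auto simp: orth_compl_def)
qed

lemma orth_compl_antimono: "A \<subseteq> B \<Longrightarrow> orth_compl B \<subseteq> orth_compl A"
  by (auto simp: orth_compl_def)

lemma orth_compl_orth_compl_orth_compl:
  assumes "E \<subseteq> l2"
  shows "orth_compl (orth_compl (orth_compl E)) = orth_compl E"
  using subset_orth_compl_orth_compl[OF assms] subset_orth_compl_orth_compl[OF orth_compl_subset_l2]
    orth_compl_antimono by blast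

lemma orth_compl_inter_orth_compl_orth_compl:
  "orth_compl E \<inter> orth_compl (orth_compl E) \<subseteq> {vzero}"
  using l2inner_self_eq_0_iff by (auto simp: orth_compl_def)

lemma orth_compl_inter_subset_orth_compl_set_sum:
  assumes "A \<subseteq> l2" "B \<subseteq> l2"
  shows "orth_compl A \<inter> orth_compl B \<subseteq> orth_compl (set_sum A B)"
  using assms by (auto simp: orth_compl_def set_sum_def l2inner_vadd_left subset_iff)

lemma orth_compl_orth_compl_inter_orth_compl_trivial:
  assumes "A \<subseteq> l2" "W \<subseteq> l2" and "\<And>w. w \<in> W \<Longrightarrow> \<exists>y\<in>A. vdiff y w \<in> orth_compl W"
  shows "orth_compl (orth_compl W) \<inter> orth_compl A \<subseteq> {vzero}"
proof
  fix v assume v: "v \<in> orth_compl (orth_compl W) \<inter> orth_compl A"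
  have vl: "v \<in> l2" using v by (auto simp: orth_compl_def)
  have "l2inner w v = 0" if w: "w \<in> W" for w
  proof -
    obtain y where y: "y \<in> A" "vdiff y w \<in> orth_compl W" using assms(3) w by blast
    have "l2inner y v = 0" "l2inner (vdiff y w) v = 0"
      using v y by (auto simp: orth_compl_def)
    thus ?thesis using y w assms vl l2inner_vdiff_left[of y w v] by auto
  qed
  hence "v \<in> orth_compl W" using vl by (auto simp: orth_compl_def)
  thus "v \<in> {vzero}" using v orth_compl_inter_orth_compl_orth_compl by blast
qed

section \<open>Linear and conjugate linear isometries\<close>

definition semilinear_isometry :: "(vec \<Rightarrow> vec) \<Rightarrow> bool" where
  "semilinear_isometry T \<longleftrightarrow> lin_isometry T \<or> conj_lin_isometry T"

lemma semilinear_isometry_in_l2: "semilinear_isometry T \<Longrightarrow> x \<in> l2 \<Longrightarrow> T x \<in> l2"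
  by (auto simp: semilinear_isometry_def lin_isometry_def conj_lin_isometry_def
      isometry_on_l2_def)

lemma semilinear_isometry_vadd:
  "semilinear_isometry T \<Longrightarrow> x \<in> l2 \<Longrightarrow> y \<in> l2 \<Longrightarrow> T (vadd x y) = vadd (T x) (T y)"
  by (auto simp: semilinear_isometry_def lin_isometry_def conj_lin_isometry_def)

lemma semilinear_isometry_vscale_imaginary_unit:
  assumes "semilinear_isometry T"
  obtains c where "c = \<i> \<or> c = - \<i>" "\<And>x. x \<in> l2 \<Longrightarrow> T (vscale \<i> x) = vscale c (T x)"
  using assms by (force simp: semilinear_isometry_def lin_isometry_def conj_lin_isometry_def)

lemma semilinear_isometry_l2sqnorm:
  assumes "semilinear_isometry T" "x \<in> l2"
  shows "l2sqnorm (T x) = l2sqnorm x"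
proof -
  have "l2norm (T x) = l2norm x"
    using assms by (auto simp: semilinear_isometry_def lin_isometry_def conj_lin_isometry_def
        isometry_on_l2_def)
  thus ?thesis using assms semilinear_isometry_in_l2 by (metis l2norm_squared)
qed

lemma semilinear_isometry_eq_vzero_iff:
  assumes "semilinear_isometry T" "x \<in> l2"
  shows "T x = vzero \<longleftrightarrow> x = vzero"
  using assms semilinear_isometry_l2sqnorm[OF assms] semilinear_isometry_in_l2[OF assms]
  by (metis l2sqnorm_eq_0_iff vzero_in_l2)

lemma semilinear_isometry_vzero: "semilinear_isometry T \<Longrightarrow> T vzero = vzero"
  by (simp add: semilinear_isometry_eq_vzero_iff)

lemma semilinear_isometry_Re_l2inner:
  assumes "semilinear_isometry T" "x \<in> l2" "y \<in> l2"
  shows "Re (l2inner (T x) (T y)) = Re (l2inner x y)"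
  using semilinear_isometry_l2sqnorm[OF assms(1) vadd_in_l2[OF assms(2,3)]] assms
  by (simp add: semilinear_isometry_vadd semilinear_isometry_in_l2 semilinear_isometry_l2sqnorm
      l2sqnorm_vadd)

text \<open>The real part of the inner product is preserved by polarization; applying this to
  \<open>\<i> y\<close> shows that the imaginary part is preserved up to sign.\<close>
lemma semilinear_isometry_orthogonal_iff:
  assumes "semilinear_isometry T" "x \<in> l2" "y \<in> l2"
  shows "l2inner (T x) (T y) = 0 \<longleftrightarrow> l2inner x y = 0"
proof -
  obtain c where c: "c = \<i> \<or> c = - \<i>" "\<And>x. x \<in> l2 \<Longrightarrow> T (vscale \<i> x) = vscale c (T x)"
    using semilinear_isometry_vscale_imaginary_unit[OF assms(1)] by blast
  have "Re (cnj c * l2inner (T x) (T y)) = Re (- \<i> * l2inner x y)"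
    using semilinear_isometry_Re_l2inner[OF assms(1,2) vscale_in_l2[OF assms(3), of \<i>]] assms c(2)
    by (simp add: l2inner_vscale_right semilinear_isometry_in_l2)
  moreover have "Re (l2inner (T x) (T y)) = Re (l2inner x y)"
    using assms by (rule semilinear_isometry_Re_l2inner)
  ultimately show ?thesis
    using c(1) by (auto simp: complex_eq_iff)
qed

lemma semilinear_isometry_image_inter_orth_compl:
  assumes "semilinear_isometry M" "A \<subseteq> l2" "B \<subseteq> l2" "B \<inter> orth_compl A \<subseteq> {vzero}"
  shows "M ` B \<inter> orth_compl (M ` A) \<subseteq> {vzero}"
proof
  fix v assume "v \<in> M ` B \<inter> orth_compl (M ` A)"
  then obtain b where b: "b \<in> B" "v = M b" and orth: "\<And>a. a \<in> A \<Longrightarrow> l2inner (M a) (M b) = 0"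
    by (auto simp: orth_compl_def)
  have "l2inner a b = 0" if "a \<in> A" for a
    using orth[OF that] that b assms semilinear_isometry_orthogonal_iff by blast
  hence "b \<in> orth_compl A" using b assms(3) by (auto simp: orth_compl_def)
  thus "v \<in> {vzero}" using b assms(1,4) semilinear_isometry_vzero by auto
qed

lemma set_sum_vzero_right: "set_sum S {vzero} = S"
  by (auto simp: set_sum_def vadd_def vzero_def)

lemma swapped_images_imp_subset_vzero:
  assumes M: "semilinear_isometry M" and L: "semilinear_isometry L"
    and A: "A \<subseteq> l2" and B: "B \<subseteq> l2" "vzero \<in> B" "B \<inter> orth_compl A \<subseteq> {vzero}"
    and MB: "M ` B = L ` A" and MA: "M ` A = set_sum (L ` B) Ob"
    and Ob: "Ob \<subseteq> orth_compl (L ` l2)"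
  shows "Ob \<subseteq> {vzero}"
proof
  fix v assume v: "v \<in> Ob"
  have Ob_l2: "Ob \<subseteq> l2" using Ob orth_compl_subset_l2 by blast
  have LB_l2: "L ` B \<subseteq> l2" using B semilinear_isometry_in_l2[OF L] by auto
  have "v = vadd (L vzero) v"
    using semilinear_isometry_vzero[OF L] by (simp add: vadd_def vzero_def)
  hence "v \<in> M ` A" using MA v B(2) unfolding set_sum_def by blast
  then obtain a where a: "a \<in> A" "v = M a" by blast
  have al: "a \<in> l2" "L a \<in> l2" using a A semilinear_isometry_in_l2[OF L] by auto
  have a_orth_B: "l2inner b a = 0" if b: "b \<in> B" for b
  proof -
    have "M b \<in> L ` A" using MB b by blast
    then obtain a' where "a' \<in> A" "M b = L a'" by blast
    moreover have "l2inner (L x) v = 0" if "x \<in> l2" for x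
      using that v Ob by (auto simp: orth_compl_def)
    ultimately have "l2inner (M b) (M a) = 0" using a A by auto
    thus ?thesis using semilinear_isometry_orthogonal_iff[OF M] b al B by blast
  qed
  have "L a \<in> orth_compl (L ` B)"
    using a_orth_B semilinear_isometry_orthogonal_iff[OF L] al B by (auto simp: orth_compl_def)
  moreover have "L a \<in> orth_compl Ob"
    using Ob al Ob_l2 l2inner_commute[OF al(2)] by (fastforce simp: orth_compl_def)
  ultimately have "L a \<in> orth_compl (M ` A)"
    unfolding MA using orth_compl_inter_subset_orth_compl_set_sum[OF LB_l2 Ob_l2] by blast
  moreover have "L a \<in> M ` B" using MB a(1) by blast
  ultimately have "L a = vzero"
    using semilinear_isometry_image_inter_orth_compl[OF M A B(1,3)] by blast
  hence "a = vzero"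
    using al semilinear_isometry_eq_vzero_iff[OF L] by auto
  thus "v \<in> {vzero}" using a semilinear_isometry_vzero[OF M] by simp
qed

lemma Oc_eq_vzero_transfer:
  assumes f_pairs: "sends_pairs_to_equiv f"
    and L: "semilinear_isometry L"
    and O_sub: "\<forall>X\<in>Ginf. closed_subspace (Oc X) \<and> Oc X \<subseteq> orth_compl (L ` l2)"
    and f_decomp: "\<forall>X\<in>Ginf. f X = set_sum (L ` X) (Oc X)"
    and A: "A \<in> Ginf" "Oc A = {vzero}"
    and B: "B \<in> Ginf" "B \<inter> orth_compl A \<subseteq> {vzero}"
  shows "Oc B = {vzero}"
proof -
  have Al: "A \<subseteq> l2" and Bl: "B \<subseteq> l2" and B0: "vzero \<in> B"
    using A B by (auto simp: Ginf_def closed_subspace_def)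
  have OB: "closed_subspace (Oc B)" "Oc B \<subseteq> orth_compl (L ` l2)" using O_sub B by auto
  have fA: "f A = L ` A" using f_decomp A by (simp add: set_sum_vzero_right)
  have fB: "f B = set_sum (L ` B) (Oc B)" using f_decomp B by simp
  from f_pairs[unfolded sends_pairs_to_equiv_def, rule_format, OF A(1) B(1)]
  obtain M where M: "lin_isometry M" "{f A, f B} = {M ` A, M ` B}" by blast
  have M': "semilinear_isometry M" using M(1) by (simp add: semilinear_isometry_def)
  from M(2) consider "f A = M ` A" "f B = M ` B" | "f A = M ` B" "f B = M ` A"
    by (auto simp: doubleton_eq_iff)
  hence "Oc B \<subseteq> {vzero}"
  proof cases
    case 1
    have "Oc B \<subseteq> f B"
      using B0 semilinear_isometry_vzero[OF L] unfolding fB set_sum_def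
      by (force simp: vadd_def vzero_def)
    moreover have "orth_compl (L ` l2) \<subseteq> orth_compl (M ` A)"
      using 1 fA Al by (metis image_mono orth_compl_antimono)
    ultimately show ?thesis
      using 1 OB(2) semilinear_isometry_image_inter_orth_compl[OF M' Al Bl B(2)] by blast
  next
    case 2
    hence "M ` B = L ` A" "M ` A = set_sum (L ` B) (Oc B)" using fA fB by simp_all
    thus ?thesis by (rule swapped_images_imp_subset_vzero[OF M' L Al Bl B0 B(2) _ _ OB(2)])
  qed
  thus ?thesis using closed_subspace_vzero[OF OB(1)] by blast
qed

section \<open>Finite dimension\<close>

interpretation l2vs: vector_space vscale
  by unfold_locales (auto simp: vscale_def fun_eq_iff algebra_simps)

lemma vadd_eq_plus: "vadd x y = x + y"
  by (simp add: vadd_def fun_eq_iff)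

lemma vzero_eq_zero: "vzero = 0"
  by (simp add: vzero_def zero_fun_def)

lemma sum_apply_vec: "sum g T n = (\<Sum>a\<in>T. (g a :: vec) n)"
  by (induction T rule: infinite_finite_induct) auto

lemma cspan_l2_eq_span: "cspan_l2 F = l2vs.span F"
  unfolding cspan_l2_def l2vs.span_explicit
  by (auto simp: fun_eq_iff sum_apply_vec vscale_def)

lemma fin_dim_iff_span: "fin_dim S \<longleftrightarrow> (\<exists>F. finite F \<and> F \<subseteq> l2 \<and> S \<subseteq> l2vs.span F)"
  by (simp add: fin_dim_def cspan_l2_eq_span)

lemma sum_vscale_in_l2: "finite T \<Longrightarrow> T \<subseteq> l2 \<Longrightarrow> (\<Sum>a\<in>T. vscale (u a) a) \<in> l2"
  by (induction T rule: finite_induct) (simp_all add: vzero_eq_zero[symmetric] vadd_eq_plus[symmetric])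

lemma l2inner_sum_vscale_left:
  "finite T \<Longrightarrow> T \<subseteq> l2 \<Longrightarrow> z \<in> l2 \<Longrightarrow>
    l2inner (\<Sum>a\<in>T. vscale (u a) a) z = (\<Sum>a\<in>T. u a * l2inner a z)"
  by (induction T rule: finite_induct)
    (simp_all add: vzero_eq_zero[symmetric] vadd_eq_plus[symmetric] l2inner_vadd_left
      sum_vscale_in_l2 l2inner_vscale_left)

definition orthogonal_seq :: "(nat \<Rightarrow> vec) \<Rightarrow> bool" where
  "orthogonal_seq s \<longleftrightarrow>
     (\<forall>k. s k \<in> l2 \<and> s k \<noteq> vzero) \<and> (\<forall>j k. j \<noteq> k \<longrightarrow> l2inner (s j) (s k) = 0)"

lemma orthogonal_seq_independent:
  assumes "orthogonal_seq s"
  shows "l2vs.independent (range s)"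
  unfolding l2vs.independent_explicit_finite_subsets
proof (intro allI impI ballI)
  fix T u v assume T: "T \<subseteq> range s" "finite T" and v: "v \<in> T"
    and sum0: "(\<Sum>v\<in>T. vscale (u v) v) = 0"
  have Tl: "T \<subseteq> l2" using T assms by (auto simp: orthogonal_seq_def)
  have "l2inner a v = 0" if a: "a \<in> T - {v}" for a
  proof -
    obtain j k where "a = s j" "v = s k" using a v T by blast
    thus ?thesis using a assms unfolding orthogonal_seq_def by (metis DiffE singletonI)
  qed
  hence "(\<Sum>a\<in>T. u a * l2inner a v) = u v * l2inner v v"
    by (simp add: sum.remove[OF T(2) v])
  moreover have "(\<Sum>a\<in>T. u a * l2inner a v) = 0"
    using l2inner_sum_vscale_left[OF T(2) Tl, of v u] v Tl sum0
    by (auto simp: vzero_eq_zero[symmetric])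
  moreover have "l2inner v v \<noteq> 0"
    using v T assms l2inner_self_eq_0_iff by (auto simp: orthogonal_seq_def)
  ultimately show "u v = 0" by simp
qed

lemma orthogonal_seq_not_fin_dim:
  assumes "orthogonal_seq s" "range s \<subseteq> S"
  shows "\<not> fin_dim S"
proof
  assume "fin_dim S"
  then obtain F where "finite F" "range s \<subseteq> l2vs.span F"
    using assms(2) unfolding fin_dim_iff_span by blast
  hence "finite (range s)"
    using l2vs.independent_span_bound orthogonal_seq_independent[OF assms(1)] by blast
  moreover have "inj s"
    using assms(1) l2inner_self_eq_0_iff by (auto intro!: injI simp: orthogonal_seq_def) metis
  ultimately show False using finite_imageD by fastforce
qed

section \<open>Orthonormal sequences in infinite-dimensional subspaces\<close>

definition l2_subspace :: "vec set \<Rightarrow> bool" where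
  "l2_subspace Y \<longleftrightarrow> Y \<subseteq> l2 \<and> vzero \<in> Y \<and>
     (\<forall>x\<in>Y. \<forall>y\<in>Y. vadd x y \<in> Y) \<and> (\<forall>c. \<forall>x\<in>Y. vscale c x \<in> Y)"

lemma closed_subspace_imp_l2_subspace: "closed_subspace X \<Longrightarrow> l2_subspace X"
  by (simp add: closed_subspace_def l2_subspace_def)

lemma l2_subspace_vdiff: "l2_subspace Y \<Longrightarrow> x \<in> Y \<Longrightarrow> y \<in> Y \<Longrightarrow> vdiff x y \<in> Y"
  unfolding l2_subspace_def vdiff_eq_vadd_vscale by blast

lemma l2_subspace_orth_inter:
  "l2_subspace Y \<Longrightarrow> F \<subseteq> l2 \<Longrightarrow> l2_subspace {y\<in>Y. \<forall>f\<in>F. l2inner f y = 0}"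
  unfolding l2_subspace_def
  by (auto simp: l2inner_vadd_right l2inner_vscale_right subset_iff)

lemma not_fin_dim_orth_vector:
  assumes Y: "l2_subspace Y" "\<not> fin_dim Y" and f: "f \<in> l2"
  shows "\<not> fin_dim {y\<in>Y. l2inner f y = 0}"
proof
  assume "fin_dim {y\<in>Y. l2inner f y = 0}"
  then obtain G where G: "finite G" "G \<subseteq> l2" "{y\<in>Y. l2inner f y = 0} \<subseteq> l2vs.span G"
    unfolding fin_dim_iff_span by blast
  have Yl: "Y \<subseteq> l2" using Y by (simp add: l2_subspace_def)
  obtain w where w: "w \<in> Y" "l2inner f w \<noteq> 0"
    using G Y(2) unfolding fin_dim_iff_span by blast
  have "Y \<subseteq> l2vs.span (insert w G)"
  proof
    fix y assume y: "y \<in> Y"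
    define c where "c = cnj (l2inner f y / l2inner f w)"
    define y' where "y' = vdiff y (vscale c w)"
    have "y' \<in> Y"
      using Y y w unfolding y'_def by (intro l2_subspace_vdiff) (auto simp: l2_subspace_def)
    moreover have "l2inner f y' = 0"
      using y w Yl f by (simp add: y'_def c_def l2inner_vdiff_right l2inner_vscale_right subset_iff)
    ultimately have "y' \<in> l2vs.span (insert w G)"
      using G l2vs.span_mono[of G "insert w G"] by blast
    moreover have "vscale c w \<in> l2vs.span (insert w G)"
      by (intro l2vs.span_scale l2vs.span_base) simp
    ultimately have "y' + vscale c w \<in> l2vs.span (insert w G)"
      by (rule l2vs.span_add)
    moreover have "y' + vscale c w = y"
      by (simp add: y'_def vdiff_def vscale_def fun_eq_iff)
    ultimately show "y \<in> l2vs.span (insert w G)" by simp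
  qed
  hence "fin_dim Y" unfolding fin_dim_iff_span using G w Yl by (intro exI[of _ "insert w G"]) auto
  thus False using Y by simp
qed

lemma not_fin_dim_orth_finite:
  assumes "finite F" "F \<subseteq> l2" "l2_subspace Y" "\<not> fin_dim Y"
  shows "\<not> fin_dim {y\<in>Y. \<forall>f\<in>F. l2inner f y = 0}"
  using assms(1,2)
proof (induction F rule: finite_induct)
  case (insert a F)
  have eq: "{y\<in>Y. \<forall>f\<in>insert a F. l2inner f y = 0}
      = {y\<in>{y\<in>Y. \<forall>f\<in>F. l2inner f y = 0}. l2inner a y = 0}"
    by auto
  have "\<not> fin_dim {y\<in>{y\<in>Y. \<forall>f\<in>F. l2inner f y = 0}. l2inner a y = 0}"
    using insert by (intro not_fin_dim_orth_vector l2_subspace_orth_inter[OF assms(3)]) auto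
  thus ?case by (metis eq)
qed (use assms in simp)

lemma exists_unit_multiple:
  assumes "x \<in> l2" "x \<noteq> vzero"
  obtains c where "c \<noteq> 0" "l2inner (vscale c x) (vscale c x) = 1"
proof
  have pos: "l2sqnorm x > 0"
    using assms l2sqnorm_nonneg l2sqnorm_eq_0_iff by (metis less_eq_real_def)
  define c where "c = complex_of_real (1 / sqrt (l2sqnorm x))"
  show "c \<noteq> 0" using pos by (simp add: c_def)
  have "cmod c = 1 / sqrt (l2sqnorm x)"
    using pos unfolding c_def norm_of_real by simp
  hence "(cmod c)^2 = 1 / l2sqnorm x"
    using pos by (simp add: power_divide)
  thus "l2inner (vscale c x) (vscale c x) = 1"
    using pos assms(1) by (simp add: l2inner_self l2sqnorm_vscale)
qed

lemma exists_unit_orth_imp_orth: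
  assumes Y: "l2_subspace Y" "\<not> fin_dim Y" and d: "d \<in> Y"
  shows "\<exists>u\<in>Y. l2inner u u = 1 \<and> (\<forall>x\<in>l2. l2inner u x = 0 \<longrightarrow> l2inner d x = 0)"
proof (cases "d = vzero")
  case True
  have "\<not> Y \<subseteq> {vzero}"
  proof
    assume "Y \<subseteq> {vzero}"
    hence "fin_dim Y"
      unfolding fin_dim_iff_span by (intro exI[of _ "{}"]) (simp add: vzero_eq_zero)
    thus False using Y by simp
  qed
  then obtain y where y: "y \<in> Y" "y \<noteq> vzero" by blast
  moreover have "y \<in> l2" using y Y by (auto simp: l2_subspace_def)
  ultimately obtain c where "l2inner (vscale c y) (vscale c y) = 1"
    using exists_unit_multiple by metis
  moreover have "vscale c y \<in> Y" using y Y by (simp add: l2_subspace_def)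
  ultimately show ?thesis using True by auto
next
  case False
  have dl: "d \<in> l2" using d Y by (auto simp: l2_subspace_def)
  obtain c where c: "c \<noteq> 0" "l2inner (vscale c d) (vscale c d) = 1"
    using exists_unit_multiple[OF dl False] by blast
  moreover have "vscale c d \<in> Y" using d Y by (simp add: l2_subspace_def)
  moreover have "l2inner d x = 0" if "x \<in> l2" "l2inner (vscale c d) x = 0" for x
    using that c dl by (simp add: l2inner_vscale_left)
  ultimately show ?thesis by blast
qed

lemma exists_near_best_approximation:
  assumes "Y \<subseteq> l2" "Y \<noteq> {}" "e \<in> l2" "\<epsilon> > 0"
  shows "\<exists>d\<in>Y. \<forall>y\<in>Y. l2sqnorm (vdiff e d) \<le> l2sqnorm (vdiff e y) + \<epsilon>"
proof -
  define D where "D = (\<lambda>y. l2sqnorm (vdiff e y)) ` Y"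
  have "bdd_below D"
    unfolding D_def bdd_below_def using assms by (intro exI[of _ 0]) (auto intro!: l2sqnorm_nonneg)
  moreover have "D \<noteq> {}" using assms by (simp add: D_def)
  ultimately obtain z where z: "z \<in> D" "z < Inf D + \<epsilon>"
    using cInf_less_iff[of D "Inf D + \<epsilon>"] assms(4) by auto
  moreover have "Inf D \<le> l2sqnorm (vdiff e y)" if "y \<in> Y" for y
    using that \<open>bdd_below D\<close> by (intro cInf_lower) (auto simp: D_def)
  ultimately show ?thesis by (force simp: D_def)
qed

text \<open>The competitor \<open>d + s \<langle>e, x\<rangle> x\<close> with \<open>s = 1 / (\<parallel>x\<parallel>\<^sup>2 + 1)\<close> has squared distance
  \<open>\<parallel>e - d\<parallel>\<^sup>2 - 2 s a + s\<^sup>2 a \<parallel>x\<parallel>\<^sup>2\<close> from \<open>e\<close>, where \<open>a = |\<langle>e, x\<rangle>|\<^sup>2\<close>.\<close>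
lemma near_best_approximation_almost_orthogonal:
  assumes Y: "l2_subspace Y" and e: "e \<in> l2" and d: "d \<in> Y"
    and near: "\<And>y. y \<in> Y \<Longrightarrow> l2sqnorm (vdiff e d) \<le> l2sqnorm (vdiff e y) + \<epsilon>"
    and x: "x \<in> Y" "l2inner d x = 0"
  shows "(cmod (l2inner e x))^2 \<le> \<epsilon> * (l2sqnorm x + 1)"
proof -
  have dl: "d \<in> l2" and xl: "x \<in> l2" using d x Y by (auto simp: l2_subspace_def)
  define N where "N = l2sqnorm x"
  define a where "a = (cmod (l2inner e x))^2"
  define s where "s = 1 / (N + 1)"
  have N: "N \<ge> 0" using l2sqnorm_nonneg[OF xl] by (simp add: N_def)
  have s: "s > 0" "s * (N + 1) = 1" using N by (auto simp: s_def)
  define t where "t = of_real s * l2inner e x"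
  have "vadd d (vscale t x) \<in> Y" using d x Y by (simp add: l2_subspace_def)
  moreover have "vdiff e (vadd d (vscale t x)) = vdiff (vdiff e d) (vscale t x)"
    by (simp add: vdiff_def vadd_def vscale_def fun_eq_iff)
  moreover have "l2sqnorm (vscale t x) = s^2 * a * N"
    using xl s by (simp add: l2sqnorm_vscale t_def norm_mult a_def N_def power_mult_distrib)
  moreover have "l2inner (vdiff e d) (vscale t x) = of_real (s * a)"
  proof -
    have "l2inner (vdiff e d) (vscale t x) = cnj t * (l2inner e x - l2inner d x)"
      using e dl xl by (simp add: l2inner_vscale_right l2inner_vdiff_left)
    also have "\<dots> = of_real s * (l2inner e x * cnj (l2inner e x))"
      using x(2) by (simp add: t_def mult.commute)
    finally show ?thesis by (simp add: a_def complex_norm_square[symmetric])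
  qed
  ultimately have "2 * (s * a) - s^2 * a * N \<le> \<epsilon>"
    using near[of "vadd d (vscale t x)"] l2sqnorm_vdiff[of "vdiff e d" "vscale t x"] e dl xl
    by simp
  moreover have "s^2 * a * N \<le> s * a"
    using mult_right_mono[of "s * N" 1 "s * a"] s N
    by (simp add: power2_eq_square algebra_simps a_def)
  ultimately have "s * a \<le> \<epsilon>" by simp
  have "a = s * a * (N + 1)" using s by (simp add: algebra_simps)
  also have "\<dots> \<le> \<epsilon> * (N + 1)" using \<open>s * a \<le> \<epsilon>\<close> N by (intro mult_right_mono) auto
  finally show ?thesis by (simp add: a_def N_def)
qed

lemma exists_unit_almost_orthogonal:
  assumes Y: "l2_subspace Y" "\<not> fin_dim Y" and e: "e \<in> l2" and \<epsilon>: "\<epsilon> > 0"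
  shows "\<exists>u\<in>Y. l2inner u u = 1 \<and>
    (\<forall>x\<in>Y. l2inner u x = 0 \<longrightarrow> (cmod (l2inner e x))^2 \<le> \<epsilon> * (l2sqnorm x + 1))"
proof -
  have Yl: "Y \<subseteq> l2" and "Y \<noteq> {}" using Y by (auto simp: l2_subspace_def)
  then obtain d where d: "d \<in> Y" "\<And>y. y \<in> Y \<Longrightarrow> l2sqnorm (vdiff e d) \<le> l2sqnorm (vdiff e y) + \<epsilon>"
    using exists_near_best_approximation[OF Yl _ e \<epsilon>] by blast
  obtain u where "u \<in> Y" "l2inner u u = 1" "\<forall>x\<in>l2. l2inner u x = 0 \<longrightarrow> l2inner d x = 0"
    using exists_unit_orth_imp_orth[OF Y d(1)] by blast
  thus ?thesis
    using near_best_approximation_almost_orthogonal[OF Y(1) e d] Yl by blast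
qed

definition orthonormal_seq :: "(nat \<Rightarrow> vec) \<Rightarrow> bool" where
  "orthonormal_seq s \<longleftrightarrow>
     (\<forall>k. s k \<in> l2) \<and> (\<forall>j k. l2inner (s j) (s k) = (if j = k then 1 else 0))"

lemma orthonormal_seqI:
  assumes l2: "\<And>k. s k \<in> l2" and unit: "\<And>k. l2inner (s k) (s k) = 1"
    and orth: "\<And>j k. j < k \<Longrightarrow> l2inner (s j) (s k) = 0"
  shows "orthonormal_seq s"
  unfolding orthonormal_seq_def
proof (intro conjI allI)
  fix j k
  show "l2inner (s j) (s k) = (if j = k then 1 else 0)"
  proof (cases rule: linorder_cases[of j k])
    case greater
    hence "l2inner (s k) (s j) = 0" by (rule orth)
    thus ?thesis using greater l2inner_commute[OF l2[of k] l2[of j]] by simp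
  qed (simp_all add: orth unit)
qed (rule l2)

lemma orthonormal_seq_imp_orthogonal_seq:
  assumes "orthonormal_seq s"
  shows "orthogonal_seq s"
proof -
  have "l2inner (s k) (s k) = 1" for k using assms by (simp add: orthonormal_seq_def)
  hence "s k \<noteq> vzero" for k by (metis l2inner_vzero_left zero_neq_one)
  thus ?thesis using assms by (simp add: orthonormal_seq_def orthogonal_seq_def)
qed

lemma exists_orthonormal_seq_almost_orthogonal:
  assumes W: "\<And>k. l2_subspace (W k)" "\<And>k. \<not> fin_dim (W k)"
    and e: "\<And>k. e k \<in> l2" and \<epsilon>: "\<And>k. \<epsilon> k > 0"
  shows "\<exists>s. orthonormal_seq s \<and> (\<forall>k. s k \<in> W k) \<and>
    (\<forall>k. \<forall>x\<in>W k. (\<forall>j\<le>k. l2inner (s j) x = 0) \<longrightarrow>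
       (cmod (l2inner (e k) x))^2 \<le> \<epsilon> k * (l2sqnorm x + 1))"
proof -
  define P where "P f k u \<longleftrightarrow> u \<in> W k \<and> l2inner u u = 1 \<and> (\<forall>j<k. l2inner (f j) u = 0) \<and>
      (\<forall>x\<in>W k. (\<forall>j<k. l2inner (f j) x = 0) \<longrightarrow> l2inner u x = 0 \<longrightarrow>
         (cmod (l2inner (e k) x))^2 \<le> \<epsilon> k * (l2sqnorm x + 1))"
    for f :: "nat \<Rightarrow> vec" and k u
  have "\<exists>s. \<forall>k. P s k (s k)"
  proof (rule dependent_wf_choice[OF wf_less])
    fix f g :: "nat \<Rightarrow> vec" and k u
    assume "\<And>j. (j, k) \<in> {(j, k). j < k} \<Longrightarrow> f j = g j"
    thus "P f k u = P g k u" by (simp add: P_def)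
  next
    fix k and f :: "nat \<Rightarrow> vec"
    assume "\<And>j. (j, k) \<in> {(j, k). j < k} \<Longrightarrow> P f j (f j)"
    hence "f j \<in> l2" if "j < k" for j
      using that W(1)[of j] by (auto simp: P_def l2_subspace_def)
    hence fl: "f ` {..<k} \<subseteq> l2" by auto
    define Y where "Y = {y\<in>W k. \<forall>g\<in>f ` {..<k}. l2inner g y = 0}"
    have "l2_subspace Y"
      unfolding Y_def by (rule l2_subspace_orth_inter[OF W(1) fl])
    moreover have "\<not> fin_dim Y"
      unfolding Y_def by (rule not_fin_dim_orth_finite[OF _ fl W]) simp
    ultimately obtain u where "u \<in> Y" "l2inner u u = 1"
      "\<forall>x\<in>Y. l2inner u x = 0 \<longrightarrow> (cmod (l2inner (e k) x))^2 \<le> \<epsilon> k * (l2sqnorm x + 1)"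
      using exists_unit_almost_orthogonal[OF _ _ e \<epsilon>] by blast
    thus "\<exists>u. P f k u" by (auto simp: P_def Y_def)
  qed
  then obtain s where s: "\<And>k. P s k (s k)" by blast
  have "s k \<in> l2" for k using s[of k] W(1)[of k] by (auto simp: P_def l2_subspace_def)
  hence "orthonormal_seq s" using s by (intro orthonormal_seqI) (auto simp: P_def)
  moreover have "(cmod (l2inner (e k) x))^2 \<le> \<epsilon> k * (l2sqnorm x + 1)"
    if "x \<in> W k" "\<forall>j\<le>k. l2inner (s j) x = 0" for k x
    using s[of k] that by (auto simp: P_def)
  ultimately show ?thesis using s by (auto simp: P_def)
qed

definition unit_vec :: "nat \<Rightarrow> vec" where
  "unit_vec n = (\<lambda>k. if k = n then 1 else 0)"

lemma unit_vec_in_l2: "unit_vec n \<in> l2"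
proof -
  have "(\<lambda>k. (cmod (unit_vec n k))^2) = (\<lambda>k. if k = n then 1 else 0)"
    by (auto simp: unit_vec_def fun_eq_iff)
  thus ?thesis by (simp add: mem_l2_iff)
qed

lemma l2inner_unit_vec: "l2inner (unit_vec n) x = cnj (x n)"
proof -
  have "(\<lambda>k. unit_vec n k * cnj (x k)) = (\<lambda>k. if k = n then cnj (x k) else 0)"
    by (auto simp: unit_vec_def fun_eq_iff)
  thus ?thesis using sums_single[of n "\<lambda>k. cnj (x k)"] by (simp add: l2inner_def sums_iff)
qed

text \<open>The directions \<open>e k\<close> run through all pairs of a coordinate \<open>n\<close> and a tolerance
  \<open>1 / (m + 1)\<close>, so a vector orthogonal to the whole sequence has all coordinates zero.\<close>
lemma exists_total_orthonormal_seq: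
  assumes X: "l2_subspace X" "\<not> fin_dim X"
  obtains u where "orthonormal_seq u" "range u \<subseteq> X"
    "\<And>x. x \<in> X \<Longrightarrow> (\<forall>k. l2inner (u k) x = 0) \<Longrightarrow> x = vzero"
proof -
  define e where "e k = unit_vec (fst (prod_decode k))" for k
  define \<epsilon> where "\<epsilon> k = inverse (real (Suc (snd (prod_decode k))))" for k
  obtain u where u: "orthonormal_seq u" "\<And>k. u k \<in> X"
    and approx: "\<And>k x. x \<in> X \<Longrightarrow> \<forall>j\<le>k. l2inner (u j) x = 0 \<Longrightarrow>
      (cmod (l2inner (e k) x))^2 \<le> \<epsilon> k * (l2sqnorm x + 1)"
    using exists_orthonormal_seq_almost_orthogonal[of "\<lambda>_. X" e \<epsilon>] X
    by (auto simp: e_def \<epsilon>_def unit_vec_in_l2)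
  have "x = vzero" if x: "x \<in> X" "\<forall>k. l2inner (u k) x = 0" for x
  proof -
    have "x n = 0" for n
    proof -
      have "(cmod (x n))^2 \<le> inverse (real (Suc m)) * (l2sqnorm x + 1)" for m
        using approx[OF x(1), of "prod_encode (n, m)"] x(2)
        by (simp add: e_def \<epsilon>_def l2inner_unit_vec)
      moreover have lim: "(\<lambda>m. inverse (real (Suc m)) * (l2sqnorm x + 1)) \<longlonglongrightarrow> 0 * (l2sqnorm x + 1)"
        by (intro tendsto_mult_right LIMSEQ_inverse_real_of_nat)
      ultimately have "(cmod (x n))^2 \<le> 0 * (l2sqnorm x + 1)"
        by (intro LIMSEQ_le_const[OF lim]) auto
      thus ?thesis by simp
    qed
    thus ?thesis by (simp add: vzero_def fun_eq_iff)
  qed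
  thus ?thesis using that u by blast
qed

lemma exists_orthogonal_orthonormal_seqs:
  assumes A: "l2_subspace A" "\<not> fin_dim A" and B: "l2_subspace B" "\<not> fin_dim B"
  obtains a q where "orthonormal_seq a" "orthonormal_seq q" "range a \<subseteq> A" "range q \<subseteq> B"
    "\<And>j k. l2inner (a j) (q k) = 0"
proof -
  define W where "W k = (if even k then A else B)" for k :: nat
  have "l2_subspace (W k)" "\<not> fin_dim (W k)" for k
    using A B by (simp_all add: W_def)
  then obtain s where s: "orthonormal_seq s" "\<And>k. s k \<in> W k"
    using exists_orthonormal_seq_almost_orthogonal[of W "\<lambda>_. vzero" "\<lambda>_. 1"] by auto
  show ?thesis
  proof
    show "orthonormal_seq (\<lambda>k. s (2 * k))" "orthonormal_seq (\<lambda>k. s (2 * k + 1))"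
      using s(1) by (auto simp: orthonormal_seq_def)
    have "s (2 * k) \<in> A" "s (2 * k + 1) \<in> B" for k
      using s(2)[of "2 * k"] s(2)[of "2 * k + 1"] by (simp_all add: W_def)
    thus "range (\<lambda>k. s (2 * k)) \<subseteq> A" "range (\<lambda>k. s (2 * k + 1)) \<subseteq> B" by auto
    show "l2inner (s (2 * j)) (s (2 * k + 1)) = 0" for j k
      using s(1) by (simp add: orthonormal_seq_def) presburger
  qed
qed

section \<open>Chains of subspaces in G-infinity\<close>

lemma orth_compl_orth_compl_range_in_Ginf:
  assumes s: "orthogonal_seq s" and t: "orthogonal_seq t" and st: "\<And>j k. l2inner (s j) (t k) = 0"
  shows "orth_compl (orth_compl (range s)) \<in> Ginf"
proof -
  have sl: "range s \<subseteq> l2" using s by (auto simp: orthogonal_seq_def)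
  have "closed_subspace (orth_compl (orth_compl (range s)))"
    by (rule closed_subspace_orth_compl[OF orth_compl_subset_l2])
  moreover have "\<not> fin_dim (orth_compl (orth_compl (range s)))"
    using orthogonal_seq_not_fin_dim[OF s] subset_orth_compl_orth_compl[OF sl] by blast
  moreover have "range t \<subseteq> orth_compl (range s)"
    using st t by (auto simp: orth_compl_def orthogonal_seq_def)
  hence "\<not> fin_dim (orth_compl (orth_compl (orth_compl (range s))))"
    unfolding orth_compl_orth_compl_orth_compl[OF sl] by (rule orthogonal_seq_not_fin_dim[OF t])
  ultimately show ?thesis by (simp add: Ginf_def)
qed

text \<open>Passing from the closed span of \<open>p\<close> to that of \<open>r\<close> through the closed span of
  \<open>p + r\<close> takes two reachable steps.\<close>
locale orthogonal_orthonormal_seqs =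
  fixes p r :: "nat \<Rightarrow> vec"
  assumes p: "orthonormal_seq p" and r: "orthonormal_seq r"
    and l2inner_p_r: "\<And>j k. l2inner (p j) (r k) = 0"
begin

lemma in_l2: "p k \<in> l2" "r k \<in> l2"
  using p r by (simp_all add: orthonormal_seq_def)

lemma l2inner_r_p: "l2inner (r j) (p k) = 0"
  using l2inner_p_r l2inner_commute[OF in_l2(1) in_l2(2)] by simp

lemma orthogonal_seq_sum: "orthogonal_seq (\<lambda>k. vadd (p k) (r k))"
  and orthogonal_seq_diff: "orthogonal_seq (\<lambda>k. vdiff (p k) (r k))"
  and l2inner_sum_diff: "l2inner (vadd (p j) (r j)) (vdiff (p k) (r k)) = 0"
  using in_l2 p r l2inner_p_r l2inner_r_p
  by (auto simp: orthonormal_seq_def orthogonal_seq_def l2inner_vadd_left l2inner_vadd_right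
      l2inner_vdiff_left l2inner_vdiff_right dest: arg_cong[of _ vzero "\<lambda>v. l2inner v v"])

definition sum_span :: "vec set" where
  "sum_span = orth_compl (orth_compl (range (\<lambda>k. vadd (p k) (r k))))"

definition r_span :: "vec set" where
  "r_span = orth_compl (orth_compl (range r))"

lemma sum_span_in_Ginf: "sum_span \<in> Ginf"
  unfolding sum_span_def using orthogonal_seq_sum orthogonal_seq_diff l2inner_sum_diff
  by (rule orth_compl_orth_compl_range_in_Ginf)

lemma r_span_in_Ginf: "r_span \<in> Ginf"
  unfolding r_span_def
  using orthonormal_seq_imp_orthogonal_seq[OF r] orthonormal_seq_imp_orthogonal_seq[OF p] l2inner_r_p
  by (rule orth_compl_orth_compl_range_in_Ginf)

lemma sum_span_inter_orth_compl:
  assumes "l2_subspace A" "range p \<subseteq> A"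
  shows "sum_span \<inter> orth_compl A \<subseteq> {vzero}"
  unfolding sum_span_def
proof (rule orth_compl_orth_compl_inter_orth_compl_trivial)
  show "A \<subseteq> l2" "range (\<lambda>k. vadd (p k) (r k)) \<subseteq> l2"
    using assms in_l2 by (auto simp: l2_subspace_def)
  fix w assume "w \<in> range (\<lambda>k. vadd (p k) (r k))"
  then obtain k where k: "w = vadd (p k) (r k)" by blast
  have "p k \<in> A" using assms(2) by auto
  hence "vscale 2 (p k) \<in> A" using assms(1) by (simp add: l2_subspace_def)
  moreover have "vdiff (vscale 2 (p k)) w = vdiff (p k) (r k)"
    by (simp add: k vdiff_def vadd_def vscale_def fun_eq_iff)
  moreover have "vdiff (p k) (r k) \<in> orth_compl (range (\<lambda>k. vadd (p k) (r k)))"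
    using l2inner_sum_diff in_l2 by (auto simp: orth_compl_def)
  ultimately show "\<exists>y\<in>A. vdiff y w \<in> orth_compl (range (\<lambda>k. vadd (p k) (r k)))" by metis
qed

lemma r_span_inter_orth_compl_sum_span: "r_span \<inter> orth_compl sum_span \<subseteq> {vzero}"
  unfolding r_span_def
proof (rule orth_compl_orth_compl_inter_orth_compl_trivial)
  show "sum_span \<subseteq> l2" "range r \<subseteq> l2"
    using in_l2 orth_compl_subset_l2 by (auto simp: sum_span_def)
  fix w assume "w \<in> range r"
  then obtain k where k: "w = r k" by blast
  have "range (\<lambda>k. vadd (p k) (r k)) \<subseteq> l2" using in_l2 by auto
  hence "vadd (p k) (r k) \<in> sum_span"
    unfolding sum_span_def using subset_orth_compl_orth_compl by blast
  moreover have "vdiff (vadd (p k) (r k)) w = p k"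
    by (simp add: k vdiff_def vadd_def fun_eq_iff)
  moreover have "p k \<in> orth_compl (range r)"
    using l2inner_r_p in_l2 by (auto simp: orth_compl_def)
  ultimately show "\<exists>y\<in>sum_span. vdiff y w \<in> orth_compl (range r)" by metis
qed

lemma inter_orth_compl_sum_span_total:
  assumes X: "X \<subseteq> l2" "range p \<subseteq> orth_compl X"
    and total: "\<And>x. x \<in> X \<Longrightarrow> \<forall>k. l2inner (r k) x = 0 \<Longrightarrow> x = vzero"
  shows "X \<inter> orth_compl sum_span \<subseteq> {vzero}"
proof
  fix x assume x: "x \<in> X \<inter> orth_compl sum_span"
  have xl: "x \<in> l2" using x X by auto
  have "range (\<lambda>k. vadd (p k) (r k)) \<subseteq> sum_span"
    unfolding sum_span_def using in_l2 by (intro subset_orth_compl_orth_compl) auto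
  hence "x \<in> orth_compl (range (\<lambda>k. vadd (p k) (r k)))"
    using x orth_compl_antimono by blast
  hence "l2inner (vadd (p k) (r k)) x = 0" for k by (simp add: orth_compl_def)
  moreover have "l2inner (p k) x = 0" for k
    using x X(2) l2inner_commute[OF xl in_l2(1), of k] by (auto simp: orth_compl_def)
  ultimately have "l2inner (r k) x = 0" for k
    using in_l2 xl by (simp add: l2inner_vadd_left)
  thus "x \<in> {vzero}" using total x by blast
qed

end

lemma GinfD:
  assumes "X \<in> Ginf"
  shows "l2_subspace X" "\<not> fin_dim X" "l2_subspace (orth_compl X)" "\<not> fin_dim (orth_compl X)"
  using assms closed_subspace_orth_compl[OF closed_subspace_imp_subset_l2]
  by (auto simp: Ginf_def closed_subspace_imp_l2_subspace)

lemma Ginf_chain: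
  assumes X0: "X0 \<in> Ginf" and X: "X \<in> Ginf"
  obtains A1 A2 A3 where "A1 \<in> Ginf" "A2 \<in> Ginf" "A3 \<in> Ginf"
    "A1 \<inter> orth_compl X0 \<subseteq> {vzero}" "A2 \<inter> orth_compl A1 \<subseteq> {vzero}"
    "A3 \<inter> orth_compl A2 \<subseteq> {vzero}" "X \<inter> orth_compl A3 \<subseteq> {vzero}"
proof -
  obtain a q where a: "orthonormal_seq a" "range a \<subseteq> X0"
    and q: "orthonormal_seq q" "range q \<subseteq> orth_compl X" and aq: "\<And>j k. l2inner (a j) (q k) = 0"
    using exists_orthogonal_orthonormal_seqs GinfD[OF X0] GinfD[OF X] by metis
  obtain u where u: "orthonormal_seq u" "range u \<subseteq> X"
    and total: "\<And>x. x \<in> X \<Longrightarrow> \<forall>k. l2inner (u k) x = 0 \<Longrightarrow> x = vzero"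
    using exists_total_orthonormal_seq GinfD[OF X] by metis
  have qu: "l2inner (q j) (u k) = 0" for j k
  proof -
    have "q j \<in> orth_compl X" "u k \<in> X" using q(2) u(2) by auto
    hence "l2inner (u k) (q j) = 0" by (simp add: orth_compl_def)
    thus ?thesis using l2inner_commute[of "u k" "q j"] u(1) q(1) by (simp add: orthonormal_seq_def)
  qed
  interpret aq: orthogonal_orthonormal_seqs a q by unfold_locales (use a q aq in auto)
  interpret qu: orthogonal_orthonormal_seqs q u by unfold_locales (use q u qu in auto)
  show ?thesis
  proof
    show "aq.sum_span \<in> Ginf" "aq.r_span \<in> Ginf" "qu.sum_span \<in> Ginf"
      by (rule aq.sum_span_in_Ginf aq.r_span_in_Ginf qu.sum_span_in_Ginf)+
    show "aq.sum_span \<inter> orth_compl X0 \<subseteq> {vzero}"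
      using aq.sum_span_inter_orth_compl GinfD(1)[OF X0] a(2) by blast
    show "aq.r_span \<inter> orth_compl aq.sum_span \<subseteq> {vzero}"
      by (rule aq.r_span_inter_orth_compl_sum_span)
    have "range q \<subseteq> aq.r_span"
      unfolding aq.r_span_def using qu.in_l2 by (intro subset_orth_compl_orth_compl) auto
    thus "qu.sum_span \<inter> orth_compl aq.r_span \<subseteq> {vzero}"
      using qu.sum_span_inter_orth_compl GinfD(1)[OF aq.r_span_in_Ginf] by blast
    show "X \<inter> orth_compl qu.sum_span \<subseteq> {vzero}"
      using qu.inter_orth_compl_sum_span_total total q(2) X
      by (auto simp: Ginf_def closed_subspace_imp_subset_l2)
  qed
qed

theorem proposition1:
  fixes f :: "vec set \<Rightarrow> vec set"
    and L :: "vec \<Rightarrow> vec"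
    and Oc :: "vec set \<Rightarrow> vec set"
  assumes f_maps: "\<forall>X\<in>Ginf. f X \<in> Ginf"
    and f_pairs: "sends_pairs_to_equiv f"
    and L_iso: "lin_isometry L \<or> conj_lin_isometry L"
    and O_sub: "\<forall>X\<in>Ginf. closed_subspace (Oc X) \<and> Oc X \<subseteq> orth_compl (L ` l2)"
    and f_decomp: "\<forall>X\<in>Ginf. f X = set_sum (L ` X) (Oc X)"
    and O_zero: "X0 \<in> Ginf" "Oc X0 = {vzero}"
  shows "\<forall>X\<in>Ginf. Oc X = {vzero}"
proof
  fix X assume X: "X \<in> Ginf"
  have "semilinear_isometry L" using L_iso by (simp add: semilinear_isometry_def)
  note transfer = Oc_eq_vzero_transfer[OF f_pairs this O_sub f_decomp]
  obtain A1 A2 A3 where A: "A1 \<in> Ginf" "A2 \<in> Ginf" "A3 \<in> Ginf"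
    and chain: "A1 \<inter> orth_compl X0 \<subseteq> {vzero}" "A2 \<inter> orth_compl A1 \<subseteq> {vzero}"
      "A3 \<inter> orth_compl A2 \<subseteq> {vzero}" "X \<inter> orth_compl A3 \<subseteq> {vzero}"
    using Ginf_chain[OF O_zero(1) X] by blast
  have "Oc A1 = {vzero}" using transfer[OF O_zero A(1) chain(1)] .
  hence "Oc A2 = {vzero}" using transfer[OF A(1) _ A(2) chain(2)] by simp
  hence "Oc A3 = {vzero}" using transfer[OF A(2) _ A(3) chain(3)] by simp
  thus "Oc X = {vzero}" using transfer[OF A(3) _ X chain(4)] by simp
qed

end
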